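(* Let $\mathcal{G}=(\mathcal{V},\mathcal{E})$ be a finite connected graph with an arbitrary orientation and incidence matrix $\Omega$. Let $q\ge1$ and $\mu,\nu\in\mathcal{P}(\mathcal{V})$. Then $$V_q(\mu,\nu)=\inf\Big\{\mathcal{I}_q(v,g):\ v:[0,1]\to\mathbb{R}^{\mathcal{E}},\ g:[0,1]\to\mathcal{P}(\mathcal{E})\text{ measurable},\ \Omega\cdot\int_0^1 g(t)v(t)\,dt=\nu-\mu\Big\},$$ where $g(t)v(t)$ is the componentwise product.
   Context: For a finite graph $\mathcal{G}=(\mathcal{V},\mathcal{E})$ whose edges have been given an orientation, each edge $k$ goes from $\lfloor k\rfloor$ to $\lceil k\rceil$. The incidence matrix $\Omega=(\omega_{x,k})$ has $\omega_{x,k}=1$ if $x=\lceil k\rceil$, $\omega_{x,k}=-1$ if $x=\lfloor k\rfloor$, and $0$ otherwise. $\mathcal{P}(\mathcal{V})$ and $\mathcal{P}(\mathcal{E})$ denote probability vectors on $\mathcal{V}$ and on $\mathcal{E}$. A triple $(f,v,g)$ consists of an absolutely continuous $f:[0,1]\to\mathcal{P}(\mathcal{V})$, a measurable $v:[0,1]\to\mathbb{R}^{\mathcal{E}}$ and a measurable $g:[0,1]\to\mathcal{P}(\mathcal{E})$. The discrete transport equation $\partial_tf=\Omega\cdot(vg)$ means $\partial_t f(t)_x=\sum_k\omega_{x,k}v(t)_kg(t)_k$ for a.e. $t$ and all $x$. For $q\ge1$, $\mathcal{I}_q(v,g)=\big(\int_0^1\sum_{k\in\mathcal{E}}g(t)_k|v(t)_k|^qdt\big)^{1/q}$.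 $V_q(\mu,\nu)$ denotes the infimum of $\mathcal{I}_q(v,g)$ over all triples satisfying the transport equation with $f(0)=\mu$ and $f(1)=\nu$. *)

theory Defs
  imports "HOL-Analysis.Analysis"
begin

definition omega :: "('e \<Rightarrow> 'v) \<Rightarrow> ('e \<Rightarrow> 'v) \<Rightarrow> 'v \<Rightarrow> 'e \<Rightarrow> real" where
  "omega tail head x k = (if x = head k then 1 else 0) - (if x = tail k then 1 else 0)"

definition graph_connected :: "'v set \<Rightarrow> 'e set \<Rightarrow> ('e \<Rightarrow> 'v) \<Rightarrow> ('e \<Rightarrow> 'v) \<Rightarrow> bool" where
  "graph_connected V E tail head \<longleftrightarrow>
     (\<forall>x\<in>V. \<forall>y\<in>V. (\<lambda>a b. \<exists>k\<in>E. (tail k = a \<and> head k = b) \<or> (tail k = b \<and> head k = a))\<^sup>*\<^sup>* x y)"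

definition prob_vec :: "'a set \<Rightarrow> ('a \<Rightarrow> real) \<Rightarrow> bool" where
  "prob_vec A p \<longleftrightarrow> (\<forall>x\<in>A. 0 \<le> p x) \<and> (\<Sum>x\<in>A. p x) = 1"

definition abs_cont_on :: "real set \<Rightarrow> (real \<Rightarrow> real) \<Rightarrow> bool" where
  "abs_cont_on S h \<longleftrightarrow>
     (\<forall>\<epsilon>>0. \<exists>\<delta>>0. \<forall>(n::nat) (a::nat \<Rightarrow> real) b.
        (\<forall>i<n. a i \<le> b i \<and> {a i..b i} \<subseteq> S) \<and>
        (\<forall>i<n. \<forall>j<n. i \<noteq> j \<longrightarrow> b i \<le> a j \<or> b j \<le> a i) \<and>
        (\<Sum>i<n. b i - a i) < \<delta>
        \<longrightarrow> (\<Sum>i<n. \<bar>h (b i) - h (a i)\<bar>) < \<epsilon>)"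

definition Iq :: "'e set \<Rightarrow> real \<Rightarrow> (real \<Rightarrow> 'e \<Rightarrow> real) \<Rightarrow> (real \<Rightarrow> 'e \<Rightarrow> real) \<Rightarrow> ennreal" where
  "Iq E q v g =
    (let J = (\<integral>\<^sup>+ t. ennreal (\<Sum>k\<in>E. g t k * \<bar>v t k\<bar> powr q) \<partial>(lebesgue_on {0..1}))
     in if J = \<infinity> then \<infinity> else ennreal (enn2real J powr (1 / q)))"

definition admissible_vg :: "'e set \<Rightarrow> (real \<Rightarrow> 'e \<Rightarrow> real) \<Rightarrow> (real \<Rightarrow> 'e \<Rightarrow> real) \<Rightarrow> bool" where
  "admissible_vg E v g \<longleftrightarrow>
     (\<forall>k\<in>E. (\<lambda>t. v t k) \<in> borel_measurable (lebesgue_on {0..1})) \<and>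
     (\<forall>k\<in>E. (\<lambda>t. g t k) \<in> borel_measurable (lebesgue_on {0..1})) \<and>
     (\<forall>t\<in>{0..1}. prob_vec E (g t))"

definition transport_triple ::
  "'v set \<Rightarrow> 'e set \<Rightarrow> ('e \<Rightarrow> 'v) \<Rightarrow> ('e \<Rightarrow> 'v) \<Rightarrow>
   (real \<Rightarrow> 'v \<Rightarrow> real) \<Rightarrow> (real \<Rightarrow> 'e \<Rightarrow> real) \<Rightarrow> (real \<Rightarrow> 'e \<Rightarrow> real) \<Rightarrow> bool" where
  "transport_triple V E tail head f v g \<longleftrightarrow>
     (\<forall>x\<in>V. abs_cont_on {0..1} (\<lambda>t. f t x)) \<and>
     (\<forall>t\<in>{0..1}. prob_vec V (f t)) \<and>
     admissible_vg E v g \<and>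
     (AE t in lebesgue_on {0..1}. \<forall>x\<in>V.
        ((\<lambda>s. f s x) has_real_derivative (\<Sum>k\<in>E. omega tail head x k * v t k * g t k)) (at t))"

definition Vq :: "'v set \<Rightarrow> 'e set \<Rightarrow> ('e \<Rightarrow> 'v) \<Rightarrow> ('e \<Rightarrow> 'v) \<Rightarrow> real \<Rightarrow>
                  ('v \<Rightarrow> real) \<Rightarrow> ('v \<Rightarrow> real) \<Rightarrow> ennreal" where
  "Vq V E tail head q \<mu> \<nu> =
     Inf {Iq E q v g | f v g. transport_triple V E tail head f v g \<and>
                              (\<forall>x\<in>V. f 0 x = \<mu> x) \<and> (\<forall>x\<in>V. f 1 x = \<nu> x)}"

end

theory Submission
  imports Defs
begin

(* The right-hand side only constrains the net flux \<integral> g v of each edge.  A transport triple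
   yields such a pair: integrating the transport equation (fundamental theorem of calculus for
   absolutely continuous functions) gives the flux identity, and finite cost makes g v integrable
   because |v| \<le> 1 + |v|^q.  Conversely, a pair (v, g) with the right net flux can be replaced by
   its time averages: the density \<integral> g and the velocity \<integral> g v / \<integral> g are constant in time, turn
   the linear interpolation from \<mu> to \<nu> into a solution of the transport equation, and by
   Jensen's inequality for |.|^q cost no more than (v, g). *)

section \<open>Absolutely continuous functions\<close>

lemma has_real_derivative_local_error:
  fixes f :: "real \<Rightarrow> real"
  assumes "(f has_real_derivative D) (at x)" "e > 0"
  obtains r where "r > 0" "\<And>y. \<bar>y - x\<bar> < r \<Longrightarrow> \<bar>f y - f x - D * (y - x)\<bar> \<le> e * \<bar>y - x\<bar>"
proof -
  have "(f has_derivative (\<lambda>h. h * D)) (at x)"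
    using assms(1) by (simp add: has_field_derivative_def mult.commute[of _ D])
  then have "\<exists>r>0. \<forall>y. norm (y - x) < r \<longrightarrow> norm (f y - f x - (y - x) * D) \<le> e * norm (y - x)"
    unfolding has_derivative_at_alt using assms(2) by blast
  then show ?thesis using that by (auto simp: mult.commute)
qed

lemma tagged_partial_division_of_real:
  fixes S :: "real set"
  assumes "p tagged_partial_division_of S" "(x, K) \<in> p"
  obtains u v where "K = {u..v}" "u \<le> x" "x \<le> v" "K \<subseteq> S"
proof -
  obtain u v where "K = cbox u v"
    using tagged_partial_division_ofD(4)[OF assms] by blast
  moreover have "x \<in> K" "K \<subseteq> S"
    using tagged_partial_division_ofD(2,3)[OF assms] by auto
  ultimately show ?thesis
    using that by auto
qed

lemma tagged_piece_increment_approx: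
  fixes f :: "real \<Rightarrow> real"
  assumes "p tagged_partial_division_of S" "(x, K) \<in> p" "K \<subseteq> ball x r"
    and "\<And>y. \<bar>y - x\<bar> < r \<Longrightarrow> \<bar>f y - f x - D * (y - x)\<bar> \<le> e * \<bar>y - x\<bar>"
  shows "\<bar>measure lborel K * D - (f (Sup K) - f (Inf K))\<bar> \<le> e * measure lborel K"
proof -
  obtain u v where uv: "K = {u..v}" "u \<le> x" "x \<le> v"
    using tagged_partial_division_of_real[OF assms(1,2)] by metis
  then have "u \<in> ball x r" "v \<in> ball x r"
    using assms(3) by (auto simp del: mem_ball)
  then have "\<bar>u - x\<bar> < r" "\<bar>v - x\<bar> < r"
    by (auto simp: dist_real_def abs_minus_commute)
  then have bounds: "\<bar>f u - f x - D * (u - x)\<bar> \<le> e * \<bar>u - x\<bar>" "\<bar>f v - f x - D * (v - x)\<bar> \<le> e * \<bar>v - x\<bar>"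
    by (auto intro: assms(4))
  have "\<bar>(v - u) * D - (f v - f u)\<bar> \<le> \<bar>f u - f x - D * (u - x)\<bar> + \<bar>f v - f x - D * (v - x)\<bar>"
    by (simp add: algebra_simps)
  also have "\<dots> \<le> e * \<bar>u - x\<bar> + e * \<bar>v - x\<bar>"
    using bounds by (rule add_mono)
  also have "\<dots> = e * (v - u)"
    using uv by (simp add: algebra_simps)
  finally show ?thesis
    using uv by simp
qed

lemma abs_cont_on_finite_family:
  fixes f :: "real \<Rightarrow> real"
  assumes "abs_cont_on S f" "e > 0"
  obtains \<delta> where "\<delta> > 0"
    "\<And>(I :: 'i set) a b. finite I \<Longrightarrow> (\<forall>i\<in>I. a i \<le> b i \<and> {a i..b i} \<subseteq> S) \<Longrightarrow>
       (\<forall>i\<in>I. \<forall>j\<in>I. i \<noteq> j \<longrightarrow> b i \<le> a j \<or> b j \<le> a i) \<Longrightarrow> (\<Sum>i\<in>I. b i - a i) < \<delta> \<Longrightarrow>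
       (\<Sum>i\<in>I. \<bar>f (b i) - f (a i)\<bar>) < e"
proof -
  have "\<exists>\<delta>>0. \<forall>(n::nat) (a::nat \<Rightarrow> real) b. (\<forall>i<n. a i \<le> b i \<and> {a i..b i} \<subseteq> S) \<and>
      (\<forall>i<n. \<forall>j<n. i \<noteq> j \<longrightarrow> b i \<le> a j \<or> b j \<le> a i) \<and> (\<Sum>i<n. b i - a i) < \<delta> \<longrightarrow>
      (\<Sum>i<n. \<bar>f (b i) - f (a i)\<bar>) < e"
    using assms unfolding abs_cont_on_def by blast
  then obtain \<delta> where "\<delta> > 0" and \<delta>: "\<And>(n::nat) (a::nat \<Rightarrow> real) b.
      (\<forall>i<n. a i \<le> b i \<and> {a i..b i} \<subseteq> S) \<Longrightarrow> (\<forall>i<n. \<forall>j<n. i \<noteq> j \<longrightarrow> b i \<le> a j \<or> b j \<le> a i) \<Longrightarrow>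
      (\<Sum>i<n. b i - a i) < \<delta> \<Longrightarrow> (\<Sum>i<n. \<bar>f (b i) - f (a i)\<bar>) < e"
    by blast
  have "(\<Sum>i\<in>I. \<bar>f (b i) - f (a i)\<bar>) < e"
    if "finite I" "\<forall>i\<in>I. a i \<le> b i \<and> {a i..b i} \<subseteq> S"
      "\<forall>i\<in>I. \<forall>j\<in>I. i \<noteq> j \<longrightarrow> b i \<le> a j \<or> b j \<le> a i" "(\<Sum>i\<in>I. b i - a i) < \<delta>"
    for I :: "'i set" and a b
  proof -
    obtain \<sigma> where \<sigma>: "bij_betw \<sigma> {..<card I} I"
      using ex_bij_betw_nat_finite[OF \<open>finite I\<close>] by (auto simp: lessThan_atLeast0)
    have reindex: "(\<Sum>i\<in>I. F i) = (\<Sum>n<card I. F (\<sigma> n))" for F :: "'i \<Rightarrow> real"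
      using sum.reindex_bij_betw[OF \<sigma>, of F] by simp
    have \<sigma>I: "\<sigma> n \<in> I" if "n < card I" for n
      using \<sigma> that by (auto simp: bij_betw_def)
    have \<sigma>_inj: "\<sigma> m \<noteq> \<sigma> n" if "m < card I" "n < card I" "m \<noteq> n" for m n
      using \<sigma> that by (auto simp: bij_betw_def inj_on_def)
    have "\<forall>n<card I. a (\<sigma> n) \<le> b (\<sigma> n) \<and> {a (\<sigma> n)..b (\<sigma> n)} \<subseteq> S"
      using that(2) \<sigma>I by blast
    moreover have "\<forall>m<card I. \<forall>n<card I. m \<noteq> n \<longrightarrow> b (\<sigma> m) \<le> a (\<sigma> n) \<or> b (\<sigma> n) \<le> a (\<sigma> m)"
      using that(3) \<sigma>I \<sigma>_inj by blast
    moreover have "(\<Sum>n<card I. b (\<sigma> n) - a (\<sigma> n)) < \<delta>"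
      using that(4) by (simp add: reindex)
    ultimately have "(\<Sum>n<card I. \<bar>f (b (\<sigma> n)) - f (a (\<sigma> n))\<bar>) < e"
      by (rule \<delta>)
    then show ?thesis
      by (simp add: reindex)
  qed
  with \<open>\<delta> > 0\<close> show ?thesis using that by blast
qed

lemma disjoint_open_intervals_ordered:
  fixes a b c d :: real
  assumes "a < b" "c < d" "{a<..<b} \<inter> {c<..<d} = {}"
  shows "b \<le> c \<or> d \<le> a"
proof (rule ccontr)
  assume "\<not> ?thesis"
  then have "(max a c + min b d) / 2 \<in> {a<..<b} \<inter> {c<..<d}"
    using assms(1,2) by auto
  with assms(3) show False by blast
qed

lemma tagged_partial_division_of_real_ordered:
  fixes S :: "real set"
  assumes "p tagged_partial_division_of S" "(x, K) \<in> p" "(y, L) \<in> p" "(x, K) \<noteq> (y, L)"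
    and "Inf K < Sup K" "Inf L < Sup L"
  shows "Sup K \<le> Inf L \<or> Sup L \<le> Inf K"
proof -
  obtain u v where "K = {u..v}" "u \<le> v"
    using tagged_partial_division_of_real[OF assms(1,2)] by (metis order_trans)
  moreover obtain u' v' where "L = {u'..v'}" "u' \<le> v'"
    using tagged_partial_division_of_real[OF assms(1,3)] by (metis order_trans)
  moreover have "interior K \<inter> interior L = {}"
    using tagged_partial_division_ofD(5)[OF assms(1-4)] .
  ultimately show ?thesis
    using assms(5,6) by (auto intro!: disjoint_open_intervals_ordered)
qed

lemma abs_cont_on_tagged_partial_division:
  fixes f :: "real \<Rightarrow> real"
  assumes "abs_cont_on S f" "e > 0"
  obtains \<delta> where "\<delta> > 0"
    "\<And>p. p tagged_partial_division_of S \<Longrightarrow> (\<Sum>(x, K)\<in>p. measure lborel K) < \<delta> \<Longrightarrow>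
       (\<Sum>(x, K)\<in>p. \<bar>f (Sup K) - f (Inf K)\<bar>) < e"
proof -
  obtain \<delta> where "\<delta> > 0" and \<delta>: "\<And>(I :: (real \<times> real set) set) a b. finite I \<Longrightarrow>
      (\<forall>i\<in>I. a i \<le> b i \<and> {a i..b i} \<subseteq> S) \<Longrightarrow> (\<forall>i\<in>I. \<forall>j\<in>I. i \<noteq> j \<longrightarrow> b i \<le> a j \<or> b j \<le> a i) \<Longrightarrow>
      (\<Sum>i\<in>I. b i - a i) < \<delta> \<Longrightarrow> (\<Sum>i\<in>I. \<bar>f (b i) - f (a i)\<bar>) < e"
    by (rule abs_cont_on_finite_family[OF assms]) iprover
  have "(\<Sum>(x, K)\<in>p. \<bar>f (Sup K) - f (Inf K)\<bar>) < e"
    if p: "p tagged_partial_division_of S" and small: "(\<Sum>(x, K)\<in>p. measure lborel K) < \<delta>" for p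
  proof -
    define q where "q = {(x, K) \<in> p. Inf K < Sup K}"
    have "finite p"
      using p by (rule tagged_partial_division_ofD)
    have piece: "\<exists>u v. K = {u..v} \<and> u \<le> v \<and> K \<subseteq> S" if "(x, K) \<in> p" for x K
      using tagged_partial_division_of_real[OF p that] by (metis order_trans)
    have on_q: "(\<Sum>(x, K)\<in>p. F K) = (\<Sum>(x, K)\<in>q. F K)" if "\<And>u. F {u..u} = 0" for F :: "real set \<Rightarrow> real"
    proof (rule sum.mono_neutral_right[OF \<open>finite p\<close>])
      show "\<forall>i\<in>p - q. (case i of (x, K) \<Rightarrow> F K) = 0"
        using piece that by (fastforce simp: q_def)
    qed (auto simp: q_def)
    have "(\<Sum>i\<in>q. \<bar>f (Sup (snd i)) - f (Inf (snd i))\<bar>) < e"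
    proof (rule \<delta>)
      show "finite q"
        using \<open>finite p\<close> by (rule finite_subset[rotated]) (auto simp: q_def)
      show "\<forall>i\<in>q. Inf (snd i) \<le> Sup (snd i) \<and> {Inf (snd i)..Sup (snd i)} \<subseteq> S"
        using piece by (fastforce simp: q_def)
      show "\<forall>i\<in>q. \<forall>j\<in>q. i \<noteq> j \<longrightarrow> Sup (snd i) \<le> Inf (snd j) \<or> Sup (snd j) \<le> Inf (snd i)"
        using tagged_partial_division_of_real_ordered[OF p] by (fastforce simp: q_def)
      have "(\<Sum>(x, K)\<in>q. measure lborel K) < \<delta>"
        using small on_q[of "measure lborel"] by simp
      moreover have "Sup (snd i) - Inf (snd i) = measure lborel (snd i)" if "i \<in> q" for i
        using that piece[of "fst i" "snd i"] by (auto simp: q_def)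
      ultimately show "(\<Sum>i\<in>q. Sup (snd i) - Inf (snd i)) < \<delta>"
        by (simp add: split_def)
    qed
    then show ?thesis
      using on_q[of "\<lambda>K. \<bar>f (Sup K) - f (Inf K)\<bar>"] by (simp add: split_def)
  qed
  with \<open>\<delta> > 0\<close> show ?thesis using that by blast
qed

lemma sum_content_le_measure:
  fixes S T :: "'a::euclidean_space set"
  assumes "p tagged_partial_division_of S" "\<And>x K. (x, K) \<in> p \<Longrightarrow> K \<subseteq> T" "T \<in> lmeasurable"
  shows "(\<Sum>(x, K)\<in>p. measure lborel K) \<le> measure lebesgue T"
proof -
  have p: "p tagged_division_of \<Union>(snd ` p)"
    using assms(1) by (rule tagged_partial_division_of_Union_self)
  have div: "snd ` p division_of \<Union>(snd ` p)"
    using p by (rule division_of_tagged_division)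
  have "(\<Sum>(x, K)\<in>p. measure lborel K) = (\<Sum>K\<in>snd ` p. measure lborel K)"
    using p by (rule sum.over_tagged_division_lemma) (simp add: content_eq_0_interior)
  also have "\<dots> = (\<Sum>K\<in>snd ` p. measure lebesgue K)"
    using div by (intro sum.cong) (auto simp: measure_completion)
  also have "\<dots> = measure lebesgue (\<Union>(snd ` p))"
    using div by (rule content_division)
  also have "\<dots> \<le> measure lebesgue T"
    using assms(2,3) lmeasurable_division[OF div] by (intro measure_mono_fmeasurable) fastforce+
  finally show ?thesis .
qed

lemma negligible_open_superset_small:
  fixes N :: "'a::euclidean_space set"
  assumes "negligible N" "\<delta> > 0"
  obtains T where "open T" "N \<subseteq> T" "T \<in> lmeasurable" "measure lebesgue T < \<delta>"
proof -
  obtain T where T: "open T" "N \<subseteq> T" "T - N \<in> lmeasurable" "emeasure lebesgue (T - N) < ennreal \<delta>"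
    using sets_lebesgue_outer_open[OF negligible_imp_sets[OF assms(1)] assms(2)] by blast
  have "T = (T - N) \<union> N" using T(2) by blast
  then have "T \<in> lmeasurable"
    using T(3) assms(1) by (metis fmeasurable.Un negligible_imp_measurable)
  moreover have "measure lebesgue T = measure lebesgue (T - N)"
    using assms(1) T(3) by (intro measure_negligible_symdiff) (auto intro: negligible_subset)
  moreover have "measure lebesgue (T - N) < \<delta>"
    using T(3,4) assms(2) by (simp add: emeasure_eq_measure2 ennreal_less_iff)
  ultimately show ?thesis using that T(1,2) by auto
qed

lemma riemann_sum_error_off_exceptional_tags:
  fixes f h :: "real \<Rightarrow> real"
  assumes "a \<le> b" "p tagged_division_of {a..b}" "0 \<le> e"
    and "\<And>x K. (x, K) \<in> p \<Longrightarrow> x \<notin> N \<Longrightarrow> K \<subseteq> ball x (r x)"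
    and "\<And>x y. x \<in> {a..b} - N \<Longrightarrow> \<bar>y - x\<bar> < r x \<Longrightarrow> \<bar>f y - f x - h x * (y - x)\<bar> \<le> e * \<bar>y - x\<bar>"
  shows "\<bar>(\<Sum>(x, K)\<in>p. measure lborel K * (if x \<in> N then 0 else h x)) - (f b - f a)\<bar>
    \<le> (\<Sum>(x, K)\<in>{(x, K) \<in> p. x \<in> N}. \<bar>f (Sup K) - f (Inf K)\<bar>) + e * (b - a)"
proof -
  have p: "p tagged_partial_division_of {a..b}" "finite p"
    using assms(2) tagged_division_of_finite[OF assms(2)] by (simp_all add: tagged_division_of_def)
  have piece: "\<bar>measure lborel K * h x - (f (Sup K) - f (Inf K))\<bar> \<le> e * measure lborel K"
    if xK: "(x, K) \<in> p" and "x \<notin> N" for x K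
  proof -
    have "x \<in> {a..b} - N"
      using tagged_partial_division_ofD(2,3)[OF p(1) xK] \<open>x \<notin> N\<close> by auto
    then show ?thesis
      using tagged_piece_increment_approx[OF p(1) xK assms(4)[OF xK \<open>x \<notin> N\<close>]] assms(5) by blast
  qed
  have "\<bar>(\<Sum>(x, K)\<in>p. measure lborel K * (if x \<in> N then 0 else h x)) - (f b - f a)\<bar>
      = \<bar>\<Sum>(x, K)\<in>p. measure lborel K * (if x \<in> N then 0 else h x) - (f (Sup K) - f (Inf K))\<bar>"
    using additive_tagged_division_1[OF assms(1,2), of f] by (simp add: sum_subtractf split_def)
  also have "\<dots> \<le> (\<Sum>(x, K)\<in>p. (if x \<in> N then \<bar>f (Sup K) - f (Inf K)\<bar> else 0) + e * measure lborel K)"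
    using assms(3) piece by (intro order_trans[OF sum_abs] sum_mono) (auto simp: abs_minus_commute)
  also have "\<dots> = (\<Sum>(x, K)\<in>{(x, K) \<in> p. x \<in> N}. \<bar>f (Sup K) - f (Inf K)\<bar>) + e * (b - a)"
    using additive_content_tagged_division[of p a b] assms(1,2) p(2)
    by (simp add: sum.distrib split_def sum_distrib_left[symmetric] sum.inter_filter)
  finally show ?thesis .
qed

lemma abs_cont_on_has_integral_derivative:
  fixes f h :: "real \<Rightarrow> real"
  assumes "a \<le> b" and ac: "abs_cont_on {a..b} f" and N: "negligible N"
    and der: "\<And>t. t \<in> {a..b} - N \<Longrightarrow> (f has_real_derivative h t) (at t)"
  shows "(h has_integral (f b - f a)) {a..b}"
proof -
  have "((\<lambda>t. if t \<in> N then 0 else h t) has_integral (f b - f a)) {a..b}"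
    unfolding has_integral_real
  proof (intro allI impI)
    fix e :: real assume "e > 0"
    obtain \<delta> where "\<delta> > 0" and \<delta>: "\<And>p. p tagged_partial_division_of {a..b} \<Longrightarrow>
        (\<Sum>(x, K)\<in>p. measure lborel K) < \<delta> \<Longrightarrow> (\<Sum>(x, K)\<in>p. \<bar>f (Sup K) - f (Inf K)\<bar>) < e / 2"
      using abs_cont_on_tagged_partial_division[OF ac, of "e / 2"] \<open>e > 0\<close> by auto
    obtain T where T: "open T" "N \<subseteq> T" "T \<in> lmeasurable" "measure lebesgue T < \<delta>"
      using negligible_open_superset_small[OF N \<open>\<delta> > 0\<close>] by blast
    define \<epsilon> where "\<epsilon> = e / (2 * (b - a + 1))"
    have "\<epsilon> > 0" "\<epsilon> * (b - a) \<le> e / 2"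
      using \<open>e > 0\<close> \<open>a \<le> b\<close> by (simp_all add: \<epsilon>_def field_simps)
    have "\<exists>r>0. \<forall>y. \<bar>y - x\<bar> < r \<longrightarrow> \<bar>f y - f x - h x * (y - x)\<bar> \<le> \<epsilon> * \<bar>y - x\<bar>"
      if "x \<in> {a..b} - N" for x
      using has_real_derivative_local_error[OF der[OF that] \<open>\<epsilon> > 0\<close>] by metis
    then obtain r where r: "\<And>x. x \<in> {a..b} - N \<Longrightarrow> r x > 0"
      and local_error: "\<And>x y. x \<in> {a..b} - N \<Longrightarrow> \<bar>y - x\<bar> < r x \<Longrightarrow>
           \<bar>f y - f x - h x * (y - x)\<bar> \<le> \<epsilon> * \<bar>y - x\<bar>"
      by metis
    (* Pieces tagged outside N are controlled by the derivative; pieces tagged in N lie in the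
       small open set T, so their total length is small and absolute continuity controls them. *)
    define \<gamma> where "\<gamma> x = (if x \<in> N then T else if x \<in> {a..b} then ball x (r x) else UNIV)" for x
    have "gauge \<gamma>"
      using T(1,2) r by (auto simp: gauge_def \<gamma>_def)
    moreover have "\<bar>(\<Sum>(x, K)\<in>p. measure lborel K * (if x \<in> N then 0 else h x)) - (f b - f a)\<bar> < e"
      if p: "p tagged_division_of {a..b}" and fine: "\<gamma> fine p" for p
    proof -
      define pN where "pN = {(x, K) \<in> p. x \<in> N}"
      have p': "p tagged_partial_division_of {a..b}"
        using p by (simp add: tagged_division_of_def)
      have in_gauge: "K \<subseteq> \<gamma> x" "x \<in> {a..b}" if "(x, K) \<in> p" for x K
        using fine that tagged_partial_division_ofD(2,3)[OF p' that] by (auto simp: fine_def)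
      have "pN tagged_partial_division_of {a..b}"
        using p' by (rule tagged_partial_division_subset) (auto simp: pN_def)
      moreover have "(\<Sum>(x, K)\<in>pN. measure lborel K) \<le> measure lebesgue T"
      proof (rule sum_content_le_measure[OF \<open>pN tagged_partial_division_of _\<close> _ T(3)])
        show "K \<subseteq> T" if "(x, K) \<in> pN" for x K
          using that in_gauge(1)[of x K] by (simp add: pN_def \<gamma>_def)
      qed
      ultimately have "(\<Sum>(x, K)\<in>pN. \<bar>f (Sup K) - f (Inf K)\<bar>) < e / 2"
        using T(4) by (intro \<delta>) auto
      moreover have "\<bar>(\<Sum>(x, K)\<in>p. measure lborel K * (if x \<in> N then 0 else h x)) - (f b - f a)\<bar>
          \<le> (\<Sum>(x, K)\<in>pN. \<bar>f (Sup K) - f (Inf K)\<bar>) + \<epsilon> * (b - a)"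
      proof (unfold pN_def, rule riemann_sum_error_off_exceptional_tags[OF \<open>a \<le> b\<close> p _ _ local_error])
        show "K \<subseteq> ball x (r x)" if "(x, K) \<in> p" "x \<notin> N" for x K
          using that in_gauge[OF that(1)] by (simp add: \<gamma>_def)
      qed (use \<open>\<epsilon> > 0\<close> in auto)
      ultimately show ?thesis
        using \<open>\<epsilon> * (b - a) \<le> e / 2\<close> by linarith
    qed
    ultimately show "\<exists>\<gamma>. gauge \<gamma> \<and> (\<forall>p. p tagged_division_of {a..b} \<and> \<gamma> fine p \<longrightarrow>
        norm ((\<Sum>(x, K)\<in>p. measure lborel K *\<^sub>R (if x \<in> N then 0 else h x)) - (f b - f a)) < e)"
      by auto
  qed
  then show ?thesis
    by (rule has_integral_spike[OF N, rotated]) simp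
qed

lemma abs_cont_on_affine: "abs_cont_on S (\<lambda>t. a + t * c)"
  unfolding abs_cont_on_def
proof (intro allI impI exI conjI)
  fix e :: real assume "e > 0"
  then show "e / (\<bar>c\<bar> + 1) > 0" by simp
  fix n :: nat and l r :: "nat \<Rightarrow> real"
  assume H: "(\<forall>i<n. l i \<le> r i \<and> {l i..r i} \<subseteq> S) \<and>
      (\<forall>i<n. \<forall>j<n. i \<noteq> j \<longrightarrow> r i \<le> l j \<or> r j \<le> l i) \<and> (\<Sum>i<n. r i - l i) < e / (\<bar>c\<bar> + 1)"
  have "\<bar>a + r i * c - (a + l i * c)\<bar> = \<bar>c\<bar> * (r i - l i)" if "i < n" for i
  proof -
    have "a + r i * c - (a + l i * c) = c * (r i - l i)"
      by (simp add: algebra_simps)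
    then show ?thesis
      using H that by (simp add: abs_mult)
  qed
  then have "(\<Sum>i<n. \<bar>a + r i * c - (a + l i * c)\<bar>) = \<bar>c\<bar> * (\<Sum>i<n. r i - l i)"
    by (simp add: sum_distrib_left)
  also have "\<dots> \<le> \<bar>c\<bar> * (e / (\<bar>c\<bar> + 1))"
    using H by (intro mult_left_mono) auto
  also have "\<dots> < e"
    using \<open>e > 0\<close> by (simp add: field_simps)
  finally show "(\<Sum>i<n. \<bar>a + r i * c - (a + l i * c)\<bar>) < e" .
qed

theorem abs_cont_on_fundamental_theorem_of_calculus:
  fixes f h :: "real \<Rightarrow> real"
  assumes "a \<le> b" and "abs_cont_on {a..b} f"
    and "AE t in lebesgue_on {a..b}. (f has_real_derivative h t) (at t)"
    and "integrable (lebesgue_on {a..b}) h"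
  shows "f b - f a = (\<integral>t. h t \<partial>lebesgue_on {a..b})"
proof -
  obtain N where N: "N \<in> null_sets (lebesgue_on {a..b})"
    and der: "{t \<in> space (lebesgue_on {a..b}). \<not> (f has_real_derivative h t) (at t)} \<subseteq> N"
    using AE_E[OF assms(3)] by (metis null_setsI)
  have "negligible N"
    using N by (simp add: null_sets_restrict_space negligible_iff_null_sets)
  then have "(h has_integral (f b - f a)) {a..b}"
    using der by (intro abs_cont_on_has_integral_derivative[OF assms(1,2)]) auto
  moreover have "(h has_integral (\<integral>t. h t \<partial>lebesgue_on {a..b})) {a..b}"
    by (rule has_integral_integral_lebesgue_on[OF assms(4)]) simp
  ultimately show ?thesis
    by (rule has_integral_unique)
qed

section \<open>Inequalities for powers\<close>

lemma abs_le_one_plus_powr: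
  fixes x q :: real
  assumes "q \<ge> 1"
  shows "\<bar>x\<bar> \<le> 1 + \<bar>x\<bar> powr q"
proof (cases "\<bar>x\<bar> \<le> 1")
  case False
  then have "\<bar>x\<bar> powr 1 \<le> \<bar>x\<bar> powr q"
    using assms by (intro powr_mono) auto
  then show ?thesis using False by simp
qed (simp add: add_increasing2)

lemma powr_above_tangent:
  fixes x a q :: real
  assumes "x \<ge> 0" "a > 0" "q \<ge> 1"
  shows "a powr q + q * a powr (q - 1) * (x - a) \<le> x powr q"
proof (cases "x = 0")
  case True
  have "a powr q = a * a powr (q - 1)"
    using assms by (simp add: powr_diff)
  then have "a powr q + q * a powr (q - 1) * (x - a) = (1 - q) * a powr q"
    using True by (simp add: algebra_simps)
  also have "\<dots> \<le> 0"
    using assms by (simp add: mult_nonpos_nonneg)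
  finally show ?thesis using True by simp
next
  case False
  have "q * a powr (q - 1) * (x - a) \<le> x powr q - a powr q"
  proof (rule convex_on_imp_above_tangent[OF powr_convex[OF assms(3)]])
    show "((\<lambda>x. x powr q) has_real_derivative q * a powr (q - 1)) (at a within {0<..})"
      using assms by (auto intro!: derivative_eq_intros)
  qed (use assms False in \<open>auto simp: interior_open\<close>)
  then show ?thesis by simp
qed

lemma weighted_jensen_powr:
  fixes M :: "'a measure" and g w :: "'a \<Rightarrow> real"
  assumes g: "\<And>t. t \<in> space M \<Longrightarrow> g t \<ge> 0" and w: "\<And>t. t \<in> space M \<Longrightarrow> w t \<ge> 0"
    and "integrable M g" "integrable M (\<lambda>t. g t * w t)" "integrable M (\<lambda>t. g t * w t powr q)"
    and "q \<ge> 1" and G: "(\<integral>t. g t \<partial>M) > 0"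
  shows "(\<integral>t. g t \<partial>M) * ((\<integral>t. g t * w t \<partial>M) / (\<integral>t. g t \<partial>M)) powr q
         \<le> (\<integral>t. g t * w t powr q \<partial>M)"
proof -
  define G where "G = (\<integral>t. g t \<partial>M)"
  define m where "m = (\<integral>t. g t * w t \<partial>M)"
  define a where "a = m / G"
  have "m \<ge> 0"
    unfolding m_def using g w by (intro integral_nonneg_AE AE_I2) auto
  show ?thesis
  proof (cases "m = 0")
    case True
    then show ?thesis
      using g \<open>q \<ge> 1\<close> by (simp add: G_def[symmetric] m_def[symmetric] integral_nonneg_AE)
  next
    case False
    then have "a > 0"
      using \<open>m \<ge> 0\<close> G by (simp add: a_def G_def)
    define c where "c = q * a powr (q - 1)"
    have "a powr q * g t + c * (g t * w t) - c * a * g t \<le> g t * w t powr q"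
      if "t \<in> space M" for t
    proof -
      have "g t * (a powr q + c * (w t - a)) \<le> g t * w t powr q"
        using powr_above_tangent[OF w[OF that] \<open>a > 0\<close> \<open>q \<ge> 1\<close>] g[OF that]
        unfolding c_def by (rule mult_left_mono)
      then show ?thesis by (simp add: algebra_simps)
    qed
    then have "(\<integral>t. a powr q * g t + c * (g t * w t) - c * a * g t \<partial>M) \<le> (\<integral>t. g t * w t powr q \<partial>M)"
      using assms by (intro integral_mono) auto
    also have "(\<integral>t. a powr q * g t + c * (g t * w t) - c * a * g t \<partial>M) = a powr q * G + c * m - c * a * G"
      using assms by (simp add: G_def m_def)
    also have "c * m = c * a * G"
      using G by (simp add: a_def G_def)
    finally show ?thesis
      by (simp add: G_def[symmetric] m_def[symmetric] a_def[symmetric] mult.commute)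
  qed
qed

section \<open>Transport triples and time averages\<close>

lemma prob_vec_bounds:
  assumes "prob_vec A p" "finite A" "x \<in> A"
  shows "0 \<le> p x" "p x \<le> 1"
proof -
  show "0 \<le> p x"
    using assms by (simp add: prob_vec_def)
  have "p x \<le> (\<Sum>y\<in>A. p y)"
    using assms by (intro member_le_sum) (auto simp: prob_vec_def)
  then show "p x \<le> 1"
    using assms(1) by (simp add: prob_vec_def)
qed

lemma admissible_vg_measurable:
  assumes "admissible_vg E v g" "k \<in> E"
  shows "(\<lambda>t. v t k) \<in> borel_measurable (lebesgue_on {0..1})"
    and "(\<lambda>t. g t k) \<in> borel_measurable (lebesgue_on {0..1})"
  using assms by (auto simp: admissible_vg_def)

lemma admissible_vg_prob_vec:
  assumes "admissible_vg E v g" "t \<in> {0..1}"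
  shows "prob_vec E (g t)"
  using assms by (simp add: admissible_vg_def)

lemma admissible_vg_density_nonneg:
  assumes "admissible_vg E v g" "k \<in> E" "t \<in> {0..1}"
  shows "0 \<le> g t k"
  using admissible_vg_prob_vec[OF assms(1,3)] assms(2) by (simp add: prob_vec_def)

lemma admissible_vg_integrable_density:
  assumes "finite E" "admissible_vg E v g" "k \<in> E"
  shows "integrable (lebesgue_on {0..1}) (\<lambda>t. g t k)"
proof (rule finite_measure.integrable_const_bound[where B = 1])
  show "finite_measure (lebesgue_on {0..1::real})"
    by (rule finite_measure_lebesgue_on) simp
  show "AE t in lebesgue_on {0..1}. norm (g t k) \<le> 1"
    using prob_vec_bounds[OF admissible_vg_prob_vec[OF assms(2)] assms(1,3)] by (intro AE_I2) auto
qed (rule admissible_vg_measurable[OF assms(2,3)])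

lemma Iq_finite:
  assumes "finite E" "admissible_vg E v g" "Iq E q v g \<noteq> \<infinity>"
  shows Iq_finite_integrable: "\<And>k. k \<in> E \<Longrightarrow> integrable (lebesgue_on {0..1}) (\<lambda>t. g t k * \<bar>v t k\<bar> powr q)"
    and Iq_finite_eq: "Iq E q v g =
      ennreal ((\<integral>t. (\<Sum>k\<in>E. g t k * \<bar>v t k\<bar> powr q) \<partial>lebesgue_on {0..1}) powr (1 / q))"
proof -
  let ?L = "lebesgue_on {0..1::real}"
  define J where "J = (\<integral>\<^sup>+ t. ennreal (\<Sum>k\<in>E. g t k * \<bar>v t k\<bar> powr q) \<partial>?L)"
  have "J \<noteq> \<infinity>"
    using assms(3) by (auto simp: Iq_def J_def Let_def)
  have nonneg: "0 \<le> g t k * \<bar>v t k\<bar> powr q" if "k \<in> E" "t \<in> {0..1}" for k t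
    using admissible_vg_density_nonneg[OF assms(2) that] by simp
  show integrable: "integrable ?L (\<lambda>t. g t k * \<bar>v t k\<bar> powr q)" if k: "k \<in> E" for k
  proof (rule integrableI_bounded)
    note [measurable] = admissible_vg_measurable[OF assms(2) k]
    show "(\<lambda>t. g t k * \<bar>v t k\<bar> powr q) \<in> borel_measurable ?L"
      by measurable
    have "(\<integral>\<^sup>+ t. ennreal (norm (g t k * \<bar>v t k\<bar> powr q)) \<partial>?L) \<le> J"
      unfolding J_def
      using nonneg k assms(1) by (intro nn_integral_mono ennreal_leI) (auto intro: member_le_sum)
    then show "(\<integral>\<^sup>+ t. ennreal (norm (g t k * \<bar>v t k\<bar> powr q)) \<partial>?L) < \<infinity>"
      using \<open>J \<noteq> \<infinity>\<close> by (simp add: less_top order_le_less_trans)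
  qed
  have "J = ennreal (\<integral>t. (\<Sum>k\<in>E. g t k * \<bar>v t k\<bar> powr q) \<partial>?L)"
    unfolding J_def using integrable nonneg
    by (intro nn_integral_eq_integral Bochner_Integration.integrable_sum AE_I2 sum_nonneg) auto
  moreover have "(\<integral>t. (\<Sum>k\<in>E. g t k * \<bar>v t k\<bar> powr q) \<partial>?L) \<ge> 0"
    using nonneg by (intro integral_nonneg_AE AE_I2 sum_nonneg) auto
  ultimately show "Iq E q v g = ennreal ((\<integral>t. (\<Sum>k\<in>E. g t k * \<bar>v t k\<bar> powr q) \<partial>?L) powr (1 / q))"
    by (simp add: Iq_def J_def[symmetric] Let_def)
qed

lemma Iq_finite_integrable_momentum:
  assumes "finite E" "admissible_vg E v g" "Iq E q v g \<noteq> \<infinity>" "q \<ge> 1" "k \<in> E"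
  shows "integrable (lebesgue_on {0..1}) (\<lambda>t. g t k * v t k)"
proof (rule Bochner_Integration.integrable_bound)
  show "integrable (lebesgue_on {0..1}) (\<lambda>t. g t k + g t k * \<bar>v t k\<bar> powr q)"
    using admissible_vg_integrable_density[OF assms(1,2,5)] Iq_finite_integrable[OF assms(1-3,5)]
    by (rule Bochner_Integration.integrable_add)
  note [measurable] = admissible_vg_measurable[OF assms(2,5)]
  show "(\<lambda>t. g t k * v t k) \<in> borel_measurable (lebesgue_on {0..1})"
    by measurable
  have "\<bar>g t k * v t k\<bar> \<le> \<bar>g t k + g t k * \<bar>v t k\<bar> powr q\<bar>" if "t \<in> {0..1}" for t
  proof -
    have "0 \<le> g t k"
      using admissible_vg_density_nonneg[OF assms(2,5) that] .
    moreover have "g t k * \<bar>v t k\<bar> \<le> g t k * (1 + \<bar>v t k\<bar> powr q)"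
      using abs_le_one_plus_powr[OF assms(4)] \<open>0 \<le> g t k\<close> by (rule mult_left_mono)
    ultimately show ?thesis
      by (simp add: abs_mult algebra_simps)
  qed
  then show "AE t in lebesgue_on {0..1}. norm (g t k * v t k) \<le> norm (g t k + g t k * \<bar>v t k\<bar> powr q)"
    by (intro AE_I2) auto
qed

lemma transport_triple_net_flux:
  assumes "finite E" "transport_triple V E tail head f v g" "x \<in> V"
    and "\<forall>k\<in>E. integrable (lebesgue_on {0..1}) (\<lambda>t. g t k * v t k)"
  shows "(\<Sum>k\<in>E. omega tail head x k * (\<integral>t. g t k * v t k \<partial>lebesgue_on {0..1})) = f 1 x - f 0 x"
proof -
  let ?L = "lebesgue_on {0..1::real}"
  define h where "h t = (\<Sum>k\<in>E. omega tail head x k * (g t k * v t k))" for t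
  have "f 1 x - f 0 x = (\<integral>t. h t \<partial>?L)"
  proof (rule abs_cont_on_fundamental_theorem_of_calculus)
    show "abs_cont_on {0..1} (\<lambda>t. f t x)"
      using assms(2,3) by (simp add: transport_triple_def)
    show "AE t in ?L. ((\<lambda>s. f s x) has_real_derivative h t) (at t)"
      using assms(2,3) unfolding transport_triple_def h_def
      by (auto elim!: eventually_mono simp: ac_simps)
    show "integrable ?L h"
      unfolding h_def using assms(4) by auto
  qed simp
  also have "\<dots> = (\<Sum>k\<in>E. omega tail head x k * (\<integral>t. g t k * v t k \<partial>?L))"
    unfolding h_def using assms(4) by (simp add: Bochner_Integration.integral_sum)
  finally show ?thesis by simp
qed

lemma transport_triple_imp_flux_constraint:
  assumes "finite E" "q \<ge> 1" "transport_triple V E tail head f v g" "Iq E q v g \<noteq> \<infinity>"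
    and "\<forall>x\<in>V. f 0 x = \<mu> x" "\<forall>x\<in>V. f 1 x = \<nu> x"
  shows "admissible_vg E v g"
    and "\<forall>k\<in>E. integrable (lebesgue_on {0..1}) (\<lambda>t. g t k * v t k)"
    and "\<forall>x\<in>V. (\<Sum>k\<in>E. omega tail head x k * (\<integral>t. g t k * v t k \<partial>lebesgue_on {0..1})) = \<nu> x - \<mu> x"
proof -
  show adm: "admissible_vg E v g"
    using assms(3) by (simp add: transport_triple_def)
  show int: "\<forall>k\<in>E. integrable (lebesgue_on {0..1}) (\<lambda>t. g t k * v t k)"
    using Iq_finite_integrable_momentum[OF assms(1) adm assms(4,2)] by blast
  show "\<forall>x\<in>V. (\<Sum>k\<in>E. omega tail head x k * (\<integral>t. g t k * v t k \<partial>lebesgue_on {0..1})) = \<nu> x - \<mu> x"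
    using transport_triple_net_flux[OF assms(1,3) _ int] assms(5,6) by simp
qed

definition time_average :: "(real \<Rightarrow> 'e \<Rightarrow> real) \<Rightarrow> 'e \<Rightarrow> real" where
  "time_average g k = (\<integral>t. g t k \<partial>lebesgue_on {0..1})"

text \<open>On edges that carry no mass on average the velocity is set to \<open>0\<close>; the averaged
  momentum vanishes there as well.\<close>

definition average_velocity :: "(real \<Rightarrow> 'e \<Rightarrow> real) \<Rightarrow> (real \<Rightarrow> 'e \<Rightarrow> real) \<Rightarrow> 'e \<Rightarrow> real" where
  "average_velocity v g k =
     (if time_average g k = 0 then 0 else time_average (\<lambda>t k. g t k * v t k) k / time_average g k)"

lemma time_average_nonneg:
  assumes "admissible_vg E v g" "k \<in> E"
  shows "0 \<le> time_average g k"
  unfolding time_average_def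
  using admissible_vg_density_nonneg[OF assms] by (intro integral_nonneg_AE AE_I2) auto

lemma prob_vec_time_average:
  assumes "finite E" "admissible_vg E v g"
  shows "prob_vec E (time_average g)"
proof -
  have "(\<Sum>k\<in>E. time_average g k) = (\<integral>t. (\<Sum>k\<in>E. g t k) \<partial>lebesgue_on {0..1})"
    unfolding time_average_def using admissible_vg_integrable_density[OF assms]
    by (simp add: Bochner_Integration.integral_sum)
  also have "\<dots> = (\<integral>t. 1 \<partial>lebesgue_on {0..1::real})"
    by (rule Bochner_Integration.integral_cong) (use admissible_vg_prob_vec[OF assms(2)] in \<open>auto simp: prob_vec_def\<close>)
  finally show ?thesis
    using time_average_nonneg[OF assms(2)] by (simp add: prob_vec_def measure_restrict_space)
qed

lemma time_average_momentum:
  assumes "finite E" "admissible_vg E v g" "k \<in> E"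
  shows "time_average (\<lambda>t k. g t k * v t k) k = average_velocity v g k * time_average g k"
proof (cases "time_average g k = 0")
  case True
  have "AE t in lebesgue_on {0..1}. g t k = 0"
    using True admissible_vg_integrable_density[OF assms] admissible_vg_density_nonneg[OF assms(2,3)]
    by (subst integral_nonneg_eq_0_iff_AE[symmetric]) (auto simp: time_average_def intro: AE_I2)
  then have "AE t in lebesgue_on {0..1}. g t k * v t k = 0"
    by (rule eventually_mono) simp
  then show ?thesis
    using True by (simp add: time_average_def average_velocity_def integral_eq_zero_AE)
qed (simp add: average_velocity_def)

lemma transport_triple_linear_interpolation:
  assumes "prob_vec V \<mu>" "prob_vec V \<nu>" "prob_vec E g"
    and "\<forall>x\<in>V. (\<Sum>k\<in>E. omega tail head x k * v k * g k) = \<nu> x - \<mu> x"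
  shows "transport_triple V E tail head (\<lambda>t x. \<mu> x + t * (\<nu> x - \<mu> x)) (\<lambda>t. v) (\<lambda>t. g)"
  unfolding transport_triple_def
proof (intro conjI ballI AE_I2)
  show "abs_cont_on {0..1} (\<lambda>t. \<mu> x + t * (\<nu> x - \<mu> x))" for x
    by (rule abs_cont_on_affine)
  show "prob_vec V (\<lambda>x. \<mu> x + t * (\<nu> x - \<mu> x))" if "t \<in> {0..1}" for t
  proof -
    have "\<mu> x + t * (\<nu> x - \<mu> x) = (1 - t) * \<mu> x + t * \<nu> x" for x
      by (simp add: algebra_simps)
    then show ?thesis
      using assms(1,2) that
      by (auto simp: prob_vec_def sum.distrib sum_distrib_left[symmetric] simp del: sum_distrib_left)
  qed
  show "admissible_vg E (\<lambda>t. v) (\<lambda>t. g)"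
    using assms(3) by (simp add: admissible_vg_def)
  show "((\<lambda>s. \<mu> x + s * (\<nu> x - \<mu> x)) has_real_derivative (\<Sum>k\<in>E. omega tail head x k * v k * g k)) (at t)"
    if "x \<in> V" for t x
    using assms(4) that by (auto intro!: derivative_eq_intros)
qed

lemma Iq_const:
  assumes "\<forall>k\<in>E. 0 \<le> g k"
  shows "Iq E q (\<lambda>t. v) (\<lambda>t. g) = ennreal ((\<Sum>k\<in>E. g k * \<bar>v k\<bar> powr q) powr (1 / q))"
proof -
  have "0 \<le> (\<Sum>k\<in>E. g k * \<bar>v k\<bar> powr q)"
    using assms by (intro sum_nonneg) auto
  then show ?thesis
    by (simp add: Iq_def Let_def nn_integral_const emeasure_restrict_space)
qed

lemma time_average_cost_le:
  assumes "finite E" "admissible_vg E v g" "Iq E q v g \<noteq> \<infinity>" "q \<ge> 1" "k \<in> E"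
  shows "time_average g k * \<bar>average_velocity v g k\<bar> powr q
    \<le> (\<integral>t. g t k * \<bar>v t k\<bar> powr q \<partial>lebesgue_on {0..1})"
proof (cases "time_average g k = 0")
  case True
  have "0 \<le> (\<integral>t. g t k * \<bar>v t k\<bar> powr q \<partial>lebesgue_on {0..1})"
    using admissible_vg_density_nonneg[OF assms(2,5)] by (intro integral_nonneg_AE AE_I2) simp
  then show ?thesis
    using True by simp
next
  case False
  let ?L = "lebesgue_on {0..1::real}"
  note nonneg = admissible_vg_density_nonneg[OF assms(2,5)]
  have abs_momentum: "\<bar>g t k * v t k\<bar> = g t k * \<bar>v t k\<bar>" if "t \<in> {0..1}" for t
    using nonneg[OF that] by (simp add: abs_mult)
  have "integrable ?L (\<lambda>t. g t k * \<bar>v t k\<bar>)"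
    using Iq_finite_integrable_momentum[OF assms] abs_momentum
    by (subst Bochner_Integration.integrable_cong[OF refl, of _ _ "\<lambda>t. \<bar>g t k * v t k\<bar>"]) auto
  have pos: "time_average g k > 0"
    using False time_average_nonneg[OF assms(2,5)] by simp
  have "\<bar>time_average (\<lambda>t k. g t k * v t k) k\<bar> \<le> (\<integral>t. \<bar>g t k * v t k\<bar> \<partial>?L)"
    unfolding time_average_def by (rule integral_abs_bound)
  also have "\<dots> = (\<integral>t. g t k * \<bar>v t k\<bar> \<partial>?L)"
    using abs_momentum by (intro Bochner_Integration.integral_cong) auto
  finally have "time_average g k * \<bar>average_velocity v g k\<bar> powr q
      \<le> time_average g k * ((\<integral>t. g t k * \<bar>v t k\<bar> \<partial>?L) / time_average g k) powr q"
    using pos assms(4) by (auto simp: average_velocity_def abs_div intro!: mult_left_mono powr_mono2 divide_right_mono)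
  also have "\<dots> \<le> (\<integral>t. g t k * \<bar>v t k\<bar> powr q \<partial>?L)"
    using weighted_jensen_powr[of ?L "\<lambda>t. g t k" "\<lambda>t. \<bar>v t k\<bar>" q] nonneg pos
      admissible_vg_integrable_density[OF assms(1,2,5)] \<open>integrable ?L (\<lambda>t. g t k * \<bar>v t k\<bar>)\<close>
      Iq_finite_integrable[OF assms(1-3,5)] assms(4)
    by (simp add: time_average_def)
  finally show ?thesis .
qed

lemma Iq_time_average_le:
  assumes "finite E" "admissible_vg E v g" "q \<ge> 1"
  shows "Iq E q (\<lambda>t. average_velocity v g) (\<lambda>t. time_average g) \<le> Iq E q v g"
proof (cases "Iq E q v g = \<infinity>")
  case False
  have "Iq E q (\<lambda>t. average_velocity v g) (\<lambda>t. time_average g)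
      = ennreal ((\<Sum>k\<in>E. time_average g k * \<bar>average_velocity v g k\<bar> powr q) powr (1 / q))"
    using time_average_nonneg[OF assms(2)] by (simp add: Iq_const)
  also have "\<dots> \<le> ennreal ((\<integral>t. (\<Sum>k\<in>E. g t k * \<bar>v t k\<bar> powr q) \<partial>lebesgue_on {0..1}) powr (1 / q))"
  proof (intro ennreal_leI powr_mono2)
    have "(\<Sum>k\<in>E. time_average g k * \<bar>average_velocity v g k\<bar> powr q)
        \<le> (\<Sum>k\<in>E. \<integral>t. g t k * \<bar>v t k\<bar> powr q \<partial>lebesgue_on {0..1})"
      using time_average_cost_le[OF assms(1,2) False assms(3)] by (rule sum_mono)
    also have "\<dots> = (\<integral>t. (\<Sum>k\<in>E. g t k * \<bar>v t k\<bar> powr q) \<partial>lebesgue_on {0..1})"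
      using Iq_finite_integrable[OF assms(1,2) False] by (simp add: Bochner_Integration.integral_sum)
    finally show "(\<Sum>k\<in>E. time_average g k * \<bar>average_velocity v g k\<bar> powr q)
        \<le> (\<integral>t. (\<Sum>k\<in>E. g t k * \<bar>v t k\<bar> powr q) \<partial>lebesgue_on {0..1})" .
  qed (use assms(3) time_average_nonneg[OF assms(2)] in \<open>auto intro: sum_nonneg\<close>)
  also have "\<dots> = Iq E q v g"
    using Iq_finite_eq[OF assms(1,2) False] by simp
  finally show ?thesis .
qed simp

lemma Vq_le_Iq:
  assumes "transport_triple V E tail head f v g" "\<forall>x\<in>V. f 0 x = \<mu> x" "\<forall>x\<in>V. f 1 x = \<nu> x"
  shows "Vq V E tail head q \<mu> \<nu> \<le> Iq E q v g"
  unfolding Vq_def using assms by (intro Inf_lower) blast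

lemma Vq_le_Iq_of_flux_constraint:
  assumes "finite E" "q \<ge> 1" "prob_vec V \<mu>" "prob_vec V \<nu>" "admissible_vg E v g"
    and "\<forall>x\<in>V. (\<Sum>k\<in>E. omega tail head x k * (\<integral>t. g t k * v t k \<partial>lebesgue_on {0..1})) = \<nu> x - \<mu> x"
  shows "Vq V E tail head q \<mu> \<nu> \<le> Iq E q v g"
proof -
  let ?f = "\<lambda>t x. \<mu> x + t * (\<nu> x - \<mu> x)"
  have "\<forall>x\<in>V. (\<Sum>k\<in>E. omega tail head x k * average_velocity v g k * time_average g k) = \<nu> x - \<mu> x"
    using assms(6) time_average_momentum[OF assms(1,5)]
    by (simp add: time_average_def mult.assoc)
  then have "transport_triple V E tail head ?f (\<lambda>t. average_velocity v g) (\<lambda>t. time_average g)"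
    using assms(3,4) prob_vec_time_average[OF assms(1,5)]
    by (rule transport_triple_linear_interpolation[rotated 3])
  then have "Vq V E tail head q \<mu> \<nu> \<le> Iq E q (\<lambda>t. average_velocity v g) (\<lambda>t. time_average g)"
    by (rule Vq_le_Iq) simp_all
  also have "\<dots> \<le> Iq E q v g"
    using assms(1,5,2) by (rule Iq_time_average_le)
  finally show ?thesis .
qed

theorem mainTheorem4:
  fixes V :: "'v set" and E :: "'e set" and tail head :: "'e \<Rightarrow> 'v"
    and q :: real and \<mu> \<nu> :: "'v \<Rightarrow> real"
  assumes "finite V" and "finite E"
    and "\<forall>k\<in>E. tail k \<in> V \<and> head k \<in> V"
    and "graph_connected V E tail head"
    and "q \<ge> 1"
    and "prob_vec V \<mu>" and "prob_vec V \<nu>"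
  shows "Vq V E tail head q \<mu> \<nu> =
    Inf {Iq E q v g | v g. admissible_vg E v g \<and>
           (\<forall>k\<in>E. integrable (lebesgue_on {0..1}) (\<lambda>t. g t k * v t k)) \<and>
           (\<forall>x\<in>V. (\<Sum>k\<in>E. omega tail head x k *
                     (\<integral>t. g t k * v t k \<partial>(lebesgue_on {0..1}))) = \<nu> x - \<mu> x)}"
  (is "_ = Inf ?S")
proof (rule antisym)
  show "Vq V E tail head q \<mu> \<nu> \<le> Inf ?S"
    using assms(2,5,6,7) by (auto intro!: Inf_greatest Vq_le_Iq_of_flux_constraint)
  have "Inf ?S \<le> Iq E q v g"
    if "transport_triple V E tail head f v g" "\<forall>x\<in>V. f 0 x = \<mu> x" "\<forall>x\<in>V. f 1 x = \<nu> x" for f v g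
  proof (cases "Iq E q v g = \<infinity>")
    case False
    then have "Iq E q v g \<in> ?S"
      using transport_triple_imp_flux_constraint[OF assms(2,5) that(1) False that(2,3)] by blast
    then show ?thesis
      by (rule Inf_lower)
  qed simp
  then show "Inf ?S \<le> Vq V E tail head q \<mu> \<nu>"
    unfolding Vq_def by (auto intro!: Inf_greatest)
qed

end
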